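(* Every connected finite-dimensional $\Delta$-complex $\mathcal C$ admits an immersion into a $\Delta$-complex that has exactly one $0$-cell.
   Context: A $\Delta$-complex is a CW-complex $\mathcal C$ in which each $k$-cell $c$ has a distinguished characteristic map $\sigma_c\colon\Delta^k\to\mathcal C$, where $\Delta^k=[v_0,\dots,v_k]$ is the standard $k$-simplex with ordered vertices $v_0<\dots<v_k$, such that the restriction of $\sigma_c$ to each $(k-1)$-dimensional face (identified with $\Delta^{k-1}$ via the order-preserving linear homeomorphism) is the distinguished characteristic map of some $(k-1)$-cell. A map $f\colon\mathcal D\to\mathcal C$ between $\Delta$-complexes commutes with the characteristic maps if for every $k$-cell $d$ of $\mathcal D$, $f(d)$ is a $k$-cell of $\mathcal C$ and $f\circ\sigma_d=\sigma_{f(d)}$. An immersion is a continuous map that commutes with the characteristic maps and is a local homeomorphism onto its image (every point has an open neighbourhood $U$ with $f|_U$ a homeomorphism onto $f(U)\subseteq f(\mathcal D)$). *)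

theory Defs
  imports "HOL-Analysis.Analysis"
begin

text \<open>Standard k-simplex [v_0,...,v_k], points given by barycentric coordinates
  as functions nat => real vanishing beyond k (product topology on nat => real,
  which restricted to this set is the usual Euclidean topology).\<close>

definition std_simplex :: "nat \<Rightarrow> (nat \<Rightarrow> real) set" where
  "std_simplex k = {t. (\<forall>i. 0 \<le> t i) \<and> (\<forall>i>k. t i = 0) \<and> (\<Sum>i\<le>k. t i) = 1}"

definition open_simplex :: "nat \<Rightarrow> (nat \<Rightarrow> real) set" where
  "open_simplex k = {t \<in> std_simplex k. \<forall>i\<le>k. 0 < t i}"

definition simplex_top :: "nat \<Rightarrow> (nat \<Rightarrow> real) topology" where
  "simplex_top k = top_of_set (std_simplex k)"

text \<open>Order-preserving linear homeomorphism of Delta^(k-1) onto the i-th face of Delta^k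
  (the face opposite v_i): insert a zero coordinate at position i.\<close>

definition face_map :: "nat \<Rightarrow> (nat \<Rightarrow> real) \<Rightarrow> (nat \<Rightarrow> real)" where
  "face_map i t = (\<lambda>j. if j < i then t j else if j = i then 0 else t (j - 1))"

text \<open>Delta-complex structure (Hatcher): a space X with characteristic maps
  sigma c : Delta^(dm c) -> X for the cells c in I.\<close>

definition delta_complex ::
  "'x topology \<Rightarrow> 'c set \<Rightarrow> ('c \<Rightarrow> nat) \<Rightarrow> ('c \<Rightarrow> (nat \<Rightarrow> real) \<Rightarrow> 'x) \<Rightarrow> bool" where
  "delta_complex X I dm \<sigma> \<longleftrightarrow>
     (\<forall>c\<in>I. continuous_map (simplex_top (dm c)) X (\<sigma> c)) \<and>
     (\<forall>c\<in>I. inj_on (\<sigma> c) (open_simplex (dm c))) \<and>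
     (\<forall>x\<in>topspace X. \<exists>c\<in>I. x \<in> \<sigma> c ` open_simplex (dm c) \<and>
        (\<forall>c'\<in>I. x \<in> \<sigma> c' ` open_simplex (dm c') \<longrightarrow> c' = c)) \<and>
     (\<forall>c\<in>I. 0 < dm c \<longrightarrow> (\<forall>i\<le>dm c. \<exists>c'\<in>I. dm c' = dm c - 1 \<and>
        (\<forall>t\<in>std_simplex (dm c - 1). \<sigma> c (face_map i t) = \<sigma> c' t))) \<and>
     (\<forall>U. openin X U \<longleftrightarrow> U \<subseteq> topspace X \<and>
        (\<forall>c\<in>I. openin (simplex_top (dm c)) {t \<in> std_simplex (dm c). \<sigma> c t \<in> U}))"

definition zero_cells :: "'c set \<Rightarrow> ('c \<Rightarrow> nat) \<Rightarrow> 'c set" where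
  "zero_cells I dm = {c \<in> I. dm c = 0}"

definition finite_dimensional :: "'c set \<Rightarrow> ('c \<Rightarrow> nat) \<Rightarrow> bool" where
  "finite_dimensional I dm \<longleftrightarrow> (\<exists>N. \<forall>c\<in>I. dm c \<le> N)"

definition delta_immersion ::
  "'x topology \<Rightarrow> 'c set \<Rightarrow> ('c \<Rightarrow> nat) \<Rightarrow> ('c \<Rightarrow> (nat \<Rightarrow> real) \<Rightarrow> 'x) \<Rightarrow>
   'y topology \<Rightarrow> 'd set \<Rightarrow> ('d \<Rightarrow> nat) \<Rightarrow> ('d \<Rightarrow> (nat \<Rightarrow> real) \<Rightarrow> 'y) \<Rightarrow>
   ('x \<Rightarrow> 'y) \<Rightarrow> bool" where
  "delta_immersion X I dimX \<sigma>X Y J dimY \<sigma>Y f \<longleftrightarrow>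
     continuous_map X Y f \<and>
     (\<exists>\<phi>. \<forall>c\<in>I. \<phi> c \<in> J \<and> dimY (\<phi> c) = dimX c \<and>
        (\<forall>t\<in>std_simplex (dimX c). f (\<sigma>X c t) = \<sigma>Y (\<phi> c) t)) \<and>
     (\<forall>x\<in>topspace X. \<exists>U. openin X U \<and> x \<in> U \<and>
        homeomorphic_map (subtopology X U) (subtopology Y (f ` U)) f)"

end

theory Submission
  imports Defs
begin

text \<open>Collapse all 0-cells of \<open>X\<close> to a single point. The quotient is again a
  \<open>\<Delta>\<close>-complex, whose cells are one vertex and the positive-dimensional cells of \<open>X\<close>, and the
  quotient map commutes with the characteristic maps. It is a local homeomorphism: it is
  injective away from the vertices, and near a vertex \<open>x\<close> the points putting barycentric mass
  more than \<open>1/2\<close> on \<open>x\<close> form an open set containing no other vertex.\<close>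

section \<open>Standard simplices\<close>

definition simplex_vertex :: "nat \<Rightarrow> nat \<Rightarrow> real" where
  "simplex_vertex k = (\<lambda>j. if j = k then 1 else 0)"

text \<open>The order-preserving injection of \<open>{0..m}\<close> into \<open>{0..m+1}\<close> missing \<open>i\<close>;
  precomposing with it deletes the \<open>i\<close>-th barycentric coordinate, inverting \<open>face_map\<close>.\<close>

definition coface :: "nat \<Rightarrow> nat \<Rightarrow> nat" where
  "coface i k = (if k < i then k else Suc k)"

lemma sum_atMost_Suc_coface:
  fixes h :: "nat \<Rightarrow> 'a::comm_monoid_add"
  assumes "i \<le> Suc m"
  shows "(\<Sum>k\<le>Suc m. h k) = h i + (\<Sum>k\<le>m. h (coface i k))"
proof -
  have inj: "inj_on (coface i) {..m}"
    by (auto simp: inj_on_def coface_def split: if_splits)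
  have "{..Suc m} = insert i (coface i ` {..m})"
  proof (intro equalityI subsetI)
    fix x assume x: "x \<in> {..Suc m}"
    consider "x < i" | "x = i" | "i < x" by linarith
    then show "x \<in> insert i (coface i ` {..m})"
    proof cases
      case 1
      then have "x = coface i x" "x \<le> m" using assms by (auto simp: coface_def)
      then show ?thesis by blast
    next
      case 3
      then have "x = coface i (x - 1)" "x - 1 \<le> m" using x by (auto simp: coface_def)
      then show ?thesis by blast
    qed simp
  qed (use assms in \<open>auto simp: coface_def\<close>)
  moreover have "i \<notin> coface i ` {..m}"
    by (auto simp: coface_def split: if_splits)
  ultimately show ?thesis using inj by (simp add: sum.reindex)
qed

lemma face_map_simplex_vertex: "face_map i (simplex_vertex k) = simplex_vertex (coface i k)"
  by (auto simp: face_map_def simplex_vertex_def coface_def fun_eq_iff)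

lemma simplex_vertex_in_std_simplex: "k \<le> m \<Longrightarrow> simplex_vertex k \<in> std_simplex m"
  by (auto simp: std_simplex_def simplex_vertex_def)

lemma face_map_comp_coface: "t i = 0 \<Longrightarrow> face_map i (t \<circ> coface i) = t"
  by (auto simp: face_map_def coface_def fun_eq_iff)

lemma comp_coface_in_std_simplex:
  assumes "t \<in> std_simplex (Suc m)" "i \<le> Suc m" "t i = 0"
  shows "t \<circ> coface i \<in> std_simplex m"
proof -
  have "(\<Sum>k\<le>Suc m. t k) = t i + (\<Sum>k\<le>m. (t \<circ> coface i) k)"
    using sum_atMost_Suc_coface[OF assms(2)] by simp
  then have "(\<Sum>k\<le>m. (t \<circ> coface i) k) = 1"
    using assms by (simp add: std_simplex_def)
  moreover have "\<forall>j>m. (t \<circ> coface i) j = 0"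
    using assms(1,2) by (auto simp: std_simplex_def coface_def)
  ultimately show ?thesis using assms(1) by (auto simp: std_simplex_def)
qed

lemma std_simplex_0: "std_simplex 0 = {simplex_vertex 0}"
  by (auto simp: std_simplex_def simplex_vertex_def fun_eq_iff)

lemma open_simplex_0: "open_simplex 0 = std_simplex 0"
  by (auto simp: open_simplex_def std_simplex_0 simplex_vertex_def)

lemma open_simplex_subset_std_simplex: "open_simplex k \<subseteq> std_simplex k"
  by (auto simp: open_simplex_def)

lemma open_simplex_coordinate_less_1:
  assumes "s \<in> open_simplex n" "0 < n" "j \<le> n"
  shows "s j < 1"
proof (rule ccontr)
  assume "\<not> s j < 1"
  obtain k where k: "k \<le> n" "k \<noteq> j"
    using assms(2) by (cases "j = 0") (auto intro: exI[of _ 0] exI[of _ 1])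
  have pos: "\<forall>i\<le>n. 0 < s i" and sum1: "(\<Sum>i\<le>n. s i) = 1"
    using assms(1) by (auto simp: open_simplex_def std_simplex_def)
  have "(\<Sum>i\<in>{j,k}. s i) \<le> (\<Sum>i\<le>n. s i)"
    by (rule sum_mono2) (use assms(3) k pos in \<open>auto simp: less_imp_le\<close>)
  moreover have "0 < s k" using pos k by auto
  ultimately show False using k \<open>\<not> s j < 1\<close> sum1 by simp
qed

lemma topspace_simplex_top [simp]: "topspace (simplex_top k) = std_simplex k"
  by (simp add: simplex_top_def)

lemma openin_simplex_top_0: "A \<subseteq> std_simplex 0 \<Longrightarrow> openin (simplex_top 0) A"
  using openin_topspace[of "simplex_top 0"] by (auto simp: std_simplex_0 subset_singleton_iff)

lemma openin_simplex_top_partial_sum_gt: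
  "openin (simplex_top n) {t \<in> std_simplex n. a < (\<Sum>i\<le>n. if Q i then t i else (0::real))}"
proof -
  have "continuous_on UNIV (\<lambda>t::nat\<Rightarrow>real. if Q i then t i else 0)" for i
    by (cases "Q i") auto
  then have "open {t::nat\<Rightarrow>real. a < (\<Sum>i\<le>n. if Q i then t i else 0)}"
    by (intro open_Collect_less continuous_intros)
  then show ?thesis unfolding simplex_top_def openin_open by blast
qed

lemma openin_simplex_top_no_coordinate_1:
  "openin (simplex_top n) {t \<in> std_simplex n. \<forall>i\<le>n. t i \<noteq> 1}"
proof -
  have "open (\<Inter>i\<in>{..n}. {t::nat\<Rightarrow>real. t i \<noteq> 1})"
    using open_Collect_neq[of "\<lambda>t::nat\<Rightarrow>real. t _" "\<lambda>_. 1"] by (intro open_INT) auto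
  moreover have "{t \<in> std_simplex n. \<forall>i\<le>n. t i \<noteq> 1}
      = std_simplex n \<inter> (\<Inter>i\<in>{..n}. {t::nat\<Rightarrow>real. t i \<noteq> 1})"
    by auto
  ultimately show ?thesis unfolding simplex_top_def openin_open by blast
qed

section \<open>Open cells and barycentric coordinates\<close>

locale delta_complex_space =
  fixes X :: "'x topology" and I :: "'c set" and dm :: "'c \<Rightarrow> nat"
    and \<sigma> :: "'c \<Rightarrow> (nat \<Rightarrow> real) \<Rightarrow> 'x"
  assumes delta_complex: "delta_complex X I dm \<sigma>"
begin

lemma continuous_map_char_map: "c \<in> I \<Longrightarrow> continuous_map (simplex_top (dm c)) X (\<sigma> c)"
  using delta_complex by (simp add: delta_complex_def)

lemma inj_on_char_map: "c \<in> I \<Longrightarrow> inj_on (\<sigma> c) (open_simplex (dm c))"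
  using delta_complex by (simp add: delta_complex_def)

lemma ex1_open_cell:
  "x \<in> topspace X \<Longrightarrow> \<exists>c\<in>I. x \<in> \<sigma> c ` open_simplex (dm c) \<and>
     (\<forall>c'\<in>I. x \<in> \<sigma> c' ` open_simplex (dm c') \<longrightarrow> c' = c)"
  using delta_complex by (simp add: delta_complex_def)

lemma char_map_face:
  "c \<in> I \<Longrightarrow> 0 < dm c \<Longrightarrow> i \<le> dm c \<Longrightarrow> \<exists>c'\<in>I. dm c' = dm c - 1 \<and>
     (\<forall>t\<in>std_simplex (dm c - 1). \<sigma> c (face_map i t) = \<sigma> c' t)"
  using delta_complex by (simp add: delta_complex_def)

lemma openin_iff_char_map_preimages:
  "openin X U \<longleftrightarrow> U \<subseteq> topspace X \<and>
     (\<forall>c\<in>I. openin (simplex_top (dm c)) {t \<in> std_simplex (dm c). \<sigma> c t \<in> U})"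
  using delta_complex by (simp add: delta_complex_def)

lemma char_map_in_topspace: "c \<in> I \<Longrightarrow> t \<in> std_simplex (dm c) \<Longrightarrow> \<sigma> c t \<in> topspace X"
  using continuous_map_char_map continuous_map_image_subset_topspace by fastforce

text \<open>Deleting the zero coordinates of \<open>t\<close> one at a time moves \<open>\<sigma> c t\<close> into the open cell
  containing it; any sum over the vertices of \<open>c\<close> that ignores zero coordinates is unchanged.\<close>

lemma char_map_reduce_to_open_cell:
  assumes "c \<in> I" "t \<in> std_simplex (dm c)"
  shows "\<exists>c'\<in>I. \<exists>s\<in>open_simplex (dm c'). \<sigma> c t = \<sigma> c' s \<and>
     (\<forall>h::'x \<Rightarrow> real \<Rightarrow> real. (\<forall>v. h v 0 = 0) \<longrightarrow> (\<Sum>i\<le>dm c. h (\<sigma> c (simplex_vertex i)) (t i))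
        = (\<Sum>j\<le>dm c'. h (\<sigma> c' (simplex_vertex j)) (s j)))"
  using assms
proof (induction "dm c" arbitrary: c t)
  case 0
  then have "t \<in> open_simplex (dm c)" using open_simplex_0 by simp
  then show ?case using 0 by blast
next
  case (Suc m)
  show ?case
  proof (cases "t \<in> open_simplex (dm c)")
    case True
    then show ?thesis using Suc.prems by blast
  next
    case False
    then obtain i where "i \<le> Suc m" "\<not> 0 < t i"
      using Suc.prems Suc.hyps(2) unfolding open_simplex_def by auto
    moreover have "0 \<le> t i" using Suc.prems(2) by (simp add: std_simplex_def)
    ultimately have i: "i \<le> Suc m" "t i = 0" by linarith+
    obtain c'' where c'': "c'' \<in> I" "dm c'' = m"
      "\<forall>r\<in>std_simplex m. \<sigma> c (face_map i r) = \<sigma> c'' r"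
      using char_map_face[OF Suc.prems(1), of i] Suc.hyps(2)[symmetric] i by auto
    have t': "t \<circ> coface i \<in> std_simplex (dm c'')"
      using comp_coface_in_std_simplex[of t m i] Suc.prems Suc.hyps(2) i c'' by simp
    obtain c' s where cs: "c' \<in> I" "s \<in> open_simplex (dm c')" "\<sigma> c'' (t \<circ> coface i) = \<sigma> c' s"
      and sums: "\<forall>h::'x \<Rightarrow> real \<Rightarrow> real. (\<forall>v. h v 0 = 0) \<longrightarrow>
          (\<Sum>k\<le>dm c''. h (\<sigma> c'' (simplex_vertex k)) ((t \<circ> coface i) k))
        = (\<Sum>j\<le>dm c'. h (\<sigma> c' (simplex_vertex j)) (s j))"
      using Suc.hyps(1)[OF c''(2)[symmetric] c''(1) t'] by blast
    have "\<sigma> c t = \<sigma> c' s"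
      using c''(3) t' c''(2) cs(3) face_map_comp_coface[of t i, OF i(2)] by metis
    moreover have "(\<Sum>k\<le>dm c. h (\<sigma> c (simplex_vertex k)) (t k))
        = (\<Sum>j\<le>dm c'. h (\<sigma> c' (simplex_vertex j)) (s j))" if h0: "\<And>v. h v 0 = 0" for h :: "'x \<Rightarrow> real \<Rightarrow> real"
    proof -
      have "(\<Sum>k\<le>dm c. h (\<sigma> c (simplex_vertex k)) (t k))
          = (\<Sum>k\<le>m. h (\<sigma> c (simplex_vertex (coface i k))) (t (coface i k)))"
        using sum_atMost_Suc_coface[OF i(1), of "\<lambda>k. h (\<sigma> c (simplex_vertex k)) (t k)"]
          Suc.hyps(2) i h0 by simp
      also have "\<dots> = (\<Sum>k\<le>dm c''. h (\<sigma> c'' (simplex_vertex k)) ((t \<circ> coface i) k))"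
        using c'' by (intro sum.cong)
          (auto simp: face_map_simplex_vertex[symmetric] simplex_vertex_in_std_simplex)
      finally show ?thesis using sums[rule_format, of h, OF h0] by simp
    qed
    ultimately show ?thesis using cs by blast
  qed
qed

definition cell_of :: "'x \<Rightarrow> 'c" where
  "cell_of y = (THE c. c \<in> I \<and> y \<in> \<sigma> c ` open_simplex (dm c))"

definition coords_of :: "'x \<Rightarrow> nat \<Rightarrow> real" where
  "coords_of y = (THE s. s \<in> open_simplex (dm (cell_of y)) \<and> \<sigma> (cell_of y) s = y)"

lemma
  assumes c: "c \<in> I" and s: "s \<in> open_simplex (dm c)"
  shows cell_of_char_map: "cell_of (\<sigma> c s) = c"
    and coords_of_char_map: "coords_of (\<sigma> c s) = s"
proof -
  have "\<sigma> c s \<in> topspace X"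
    using char_map_in_topspace[OF c] s open_simplex_subset_std_simplex by blast
  then have unique: "\<And>c'. c' \<in> I \<and> \<sigma> c s \<in> \<sigma> c' ` open_simplex (dm c') \<Longrightarrow> c' = c"
    using ex1_open_cell c s by blast
  show cell: "cell_of (\<sigma> c s) = c" unfolding cell_of_def
    by (rule the_equality) (use c s unique in auto)
  show "coords_of (\<sigma> c s) = s" unfolding coords_of_def cell
    by (rule the_equality) (use s inj_on_char_map[OF c] in \<open>auto simp: inj_on_def\<close>)
qed

lemma
  assumes "y \<in> topspace X"
  shows cell_of_in: "cell_of y \<in> I"
    and coords_of_in_open_simplex: "coords_of y \<in> open_simplex (dm (cell_of y))"
    and char_map_cell_of_coords_of: "\<sigma> (cell_of y) (coords_of y) = y"
proof -
  from ex1_open_cell[OF assms] obtain c s where "c \<in> I" "s \<in> open_simplex (dm c)" "y = \<sigma> c s"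
    by blast
  then show "cell_of y \<in> I" "coords_of y \<in> open_simplex (dm (cell_of y))"
    "\<sigma> (cell_of y) (coords_of y) = y"
    using cell_of_char_map coords_of_char_map by auto
qed

definition vertex_sum :: "('x \<Rightarrow> real \<Rightarrow> real) \<Rightarrow> 'x \<Rightarrow> real" where
  "vertex_sum h y =
     (\<Sum>j\<le>dm (cell_of y). h (\<sigma> (cell_of y) (simplex_vertex j)) (coords_of y j))"

lemma vertex_sum_char_map:
  assumes "c \<in> I" "t \<in> std_simplex (dm c)" "\<And>v. h v 0 = 0"
  shows "vertex_sum h (\<sigma> c t) = (\<Sum>i\<le>dm c. h (\<sigma> c (simplex_vertex i)) (t i))"
proof -
  obtain c' s where c's: "c' \<in> I" "s \<in> open_simplex (dm c')" "\<sigma> c t = \<sigma> c' s" and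
    sums: "\<forall>h::'x \<Rightarrow> real \<Rightarrow> real. (\<forall>v. h v 0 = 0) \<longrightarrow> (\<Sum>i\<le>dm c. h (\<sigma> c (simplex_vertex i)) (t i))
        = (\<Sum>j\<le>dm c'. h (\<sigma> c' (simplex_vertex j)) (s j))"
    using char_map_reduce_to_open_cell[OF assms(1,2)] by blast
  show ?thesis unfolding vertex_sum_def c's(3) cell_of_char_map[OF c's(1,2)]
      coords_of_char_map[OF c's(1,2)]
    using sums[rule_format, of h, OF assms(3)] by simp
qed

definition vertex_mass :: "('x \<Rightarrow> bool) \<Rightarrow> 'x \<Rightarrow> real" where
  "vertex_mass P = vertex_sum (\<lambda>v r. if P v then r else 0)"

lemma vertex_mass_add_complement:
  assumes "y \<in> topspace X"
  shows "vertex_mass P y + vertex_mass (\<lambda>v. \<not> P v) y = 1"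
proof -
  have "vertex_mass P y + vertex_mass (\<lambda>v. \<not> P v) y = (\<Sum>j\<le>dm (cell_of y). coords_of y j)"
    unfolding vertex_mass_def vertex_sum_def sum.distrib[symmetric] by (rule sum.cong) auto
  then show ?thesis using coords_of_in_open_simplex[OF assms]
    by (simp add: open_simplex_def std_simplex_def)
qed

lemma
  assumes "y \<in> topspace X" "dm (cell_of y) = 0"
  shows coords_of_vertex: "coords_of y = simplex_vertex 0"
    and vertex_mass_vertex: "vertex_mass P y = (if P y then 1 else 0)"
proof -
  show coords: "coords_of y = simplex_vertex 0"
    using coords_of_in_open_simplex[OF assms(1)] assms(2) open_simplex_0 std_simplex_0 by simp
  then have "\<sigma> (cell_of y) (simplex_vertex 0) = y"
    using char_map_cell_of_coords_of[OF assms(1)] by simp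
  then show "vertex_mass P y = (if P y then 1 else 0)"
    using assms(2) coords by (simp add: vertex_mass_def vertex_sum_def simplex_vertex_def)
qed

text \<open>Counting coordinates equal to \<open>1\<close> detects vertices: on the open cell of a positive-dimensional
  cell every coordinate is below \<open>1\<close>.\<close>

lemma char_map_is_vertex_iff:
  assumes "c \<in> I" "t \<in> std_simplex (dm c)"
  shows "dm (cell_of (\<sigma> c t)) = 0 \<longleftrightarrow> (\<exists>i\<le>dm c. t i = 1)"
proof -
  let ?y = "\<sigma> c t" and ?ones = "vertex_sum (\<lambda>_ r. if r = 1 then 1 else 0)"
  have y: "?y \<in> topspace X" using char_map_in_topspace assms by blast
  have "?ones ?y = (\<Sum>i\<le>dm c. if t i = 1 then 1 else 0)"
    using vertex_sum_char_map[OF assms] by simp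
  moreover have "(\<Sum>i\<le>dm c. if t i = 1 then 1 else (0::real)) \<noteq> 0 \<longleftrightarrow> (\<exists>i\<le>dm c. t i = 1)"
    by (subst sum_nonneg_eq_0_iff) auto
  moreover have "?ones ?y \<noteq> 0 \<longleftrightarrow> dm (cell_of ?y) = 0"
  proof (cases "dm (cell_of ?y) = 0")
    case True
    then show ?thesis using coords_of_vertex[OF y]
      by (simp add: vertex_sum_def simplex_vertex_def)
  next
    case False
    then have "\<forall>j\<le>dm (cell_of ?y). coords_of ?y j < 1"
      using open_simplex_coordinate_less_1[OF coords_of_in_open_simplex[OF y]] by auto
    then have "?ones ?y = 0" unfolding vertex_sum_def by (intro sum.neutral) fastforce
    then show ?thesis using False by simp
  qed
  ultimately show ?thesis by simp
qed

lemma openin_non_vertices: "openin X {y \<in> topspace X. 0 < dm (cell_of y)}"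
  unfolding openin_iff_char_map_preimages
proof (intro conjI ballI)
  fix c assume c: "c \<in> I"
  have "{t \<in> std_simplex (dm c). \<sigma> c t \<in> {y \<in> topspace X. 0 < dm (cell_of y)}}
      = {t \<in> std_simplex (dm c). \<forall>i\<le>dm c. t i \<noteq> 1}"
  proof -
    have "\<sigma> c t \<in> topspace X \<and> 0 < dm (cell_of (\<sigma> c t)) \<longleftrightarrow> (\<forall>i\<le>dm c. t i \<noteq> 1)"
      if "t \<in> std_simplex (dm c)" for t
      using char_map_in_topspace[OF c that] char_map_is_vertex_iff[OF c that] by auto
    then show ?thesis by auto
  qed
  then show "openin (simplex_top (dm c))
      {t \<in> std_simplex (dm c). \<sigma> c t \<in> {y \<in> topspace X. 0 < dm (cell_of y)}}"
    using openin_simplex_top_no_coordinate_1 by simp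
qed auto

lemma openin_vertex_mass_gt: "openin X {y \<in> topspace X. a < vertex_mass P y}"
  unfolding openin_iff_char_map_preimages
proof (intro conjI ballI)
  fix c assume c: "c \<in> I"
  have "{t \<in> std_simplex (dm c). \<sigma> c t \<in> {y \<in> topspace X. a < vertex_mass P y}} =
     {t \<in> std_simplex (dm c). a < (\<Sum>i\<le>dm c. if P (\<sigma> c (simplex_vertex i)) then t i else 0)}"
    using char_map_in_topspace[OF c] vertex_sum_char_map[OF c]
    by (auto simp: vertex_mass_def)
  then show "openin (simplex_top (dm c))
      {t \<in> std_simplex (dm c). \<sigma> c t \<in> {y \<in> topspace X. a < vertex_mass P y}}"
    using openin_simplex_top_partial_sum_gt by simp
qed auto

section \<open>Collapsing the vertices\<close>

text \<open>The quotient of \<open>X\<close> collapsing all 0-cells to a point, modelled concretely: the collapsed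
  vertex is \<open>([], simplex_vertex 0)\<close>, and the interior point \<open>s\<close> of a positive-dimensional cell
  \<open>c\<close> is \<open>([c], s)\<close>.\<close>

definition collapse :: "'x \<Rightarrow> 'c list \<times> (nat \<Rightarrow> real)" where
  "collapse y =
     (if dm (cell_of y) = 0 then ([], simplex_vertex 0) else ([cell_of y], coords_of y))"

definition collapsed_cells :: "'c list set" where
  "collapsed_cells = insert [] ((\<lambda>c. [c]) ` {c\<in>I. 0 < dm c})"

definition collapsed_dim :: "'c list \<Rightarrow> nat" where
  "collapsed_dim xs = (if xs = [] then 0 else dm (hd xs))"

definition collapsed_char_map :: "'c list \<Rightarrow> (nat \<Rightarrow> real) \<Rightarrow> 'c list \<times> (nat \<Rightarrow> real)" where
  "collapsed_char_map xs t = (if xs = [] then ([], simplex_vertex 0) else collapse (\<sigma> (hd xs) t))"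

definition collapsed_carrier :: "('c list \<times> (nat \<Rightarrow> real)) set" where
  "collapsed_carrier = insert ([], simplex_vertex 0) (collapse ` topspace X)"

definition collapsed_open :: "('c list \<times> (nat \<Rightarrow> real)) set \<Rightarrow> bool" where
  "collapsed_open U \<longleftrightarrow> U \<subseteq> collapsed_carrier \<and>
     (\<forall>c\<in>collapsed_cells. openin (simplex_top (collapsed_dim c))
        {t \<in> std_simplex (collapsed_dim c). collapsed_char_map c t \<in> U})"

definition collapsed_top :: "('c list \<times> (nat \<Rightarrow> real)) topology" where
  "collapsed_top = topology collapsed_open"

lemma collapse_char_map_open_cell:
  "c \<in> I \<Longrightarrow> s \<in> open_simplex (dm c) \<Longrightarrow> 0 < dm c \<Longrightarrow> collapse (\<sigma> c s) = ([c], s)"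
  using cell_of_char_map coords_of_char_map by (simp add: collapse_def)

lemma collapse_char_map_vertex:
  "c \<in> I \<Longrightarrow> dm c = 0 \<Longrightarrow> t \<in> std_simplex 0 \<Longrightarrow> collapse (\<sigma> c t) = ([], simplex_vertex 0)"
  using cell_of_char_map[of c t] open_simplex_0 by (simp add: collapse_def)

lemma collapse_eq_non_vertex:
  assumes "y \<in> topspace X" "z \<in> topspace X" "collapse y = collapse z" "0 < dm (cell_of y)"
  shows "y = z"
proof -
  have "0 < dm (cell_of z)" "cell_of y = cell_of z" "coords_of y = coords_of z"
    using assms by (auto simp: collapse_def split: if_splits)
  then show "y = z"
    using char_map_cell_of_coords_of[OF assms(1)] char_map_cell_of_coords_of[OF assms(2)] by metis
qed

lemma collapsed_char_map_in_carrier: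
  "c \<in> collapsed_cells \<Longrightarrow> t \<in> std_simplex (collapsed_dim c) \<Longrightarrow> collapsed_char_map c t \<in> collapsed_carrier"
  using char_map_in_topspace
  by (auto simp: collapsed_cells_def collapsed_dim_def collapsed_char_map_def collapsed_carrier_def)

lemma istopology_collapsed_open: "istopology collapsed_open"
  unfolding istopology_def
proof (intro conjI allI impI)
  fix S T assume ST: "collapsed_open S" "collapsed_open T"
  show "collapsed_open (S \<inter> T)" unfolding collapsed_open_def
  proof (intro conjI ballI)
    fix c assume "c \<in> collapsed_cells"
    then have "openin (simplex_top (collapsed_dim c))
        ({t \<in> std_simplex (collapsed_dim c). collapsed_char_map c t \<in> S} \<inter>
         {t \<in> std_simplex (collapsed_dim c). collapsed_char_map c t \<in> T})"
      using ST by (intro openin_Int) (auto simp: collapsed_open_def)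
    moreover have "{t \<in> std_simplex (collapsed_dim c). collapsed_char_map c t \<in> S} \<inter>
        {t \<in> std_simplex (collapsed_dim c). collapsed_char_map c t \<in> T}
      = {t \<in> std_simplex (collapsed_dim c). collapsed_char_map c t \<in> S \<inter> T}"
      by auto
    ultimately show "openin (simplex_top (collapsed_dim c))
        {t \<in> std_simplex (collapsed_dim c). collapsed_char_map c t \<in> S \<inter> T}"
      by simp
  qed (use ST in \<open>auto simp: collapsed_open_def\<close>)
next
  fix K assume K: "\<forall>k\<in>K. collapsed_open k"
  show "collapsed_open (\<Union>K)" unfolding collapsed_open_def
  proof (intro conjI ballI)
    show "\<Union>K \<subseteq> collapsed_carrier" using K by (auto simp: collapsed_open_def)
    fix c assume c: "c \<in> collapsed_cells"
    have "openin (simplex_top (collapsed_dim c))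
        (\<Union>k\<in>K. {t \<in> std_simplex (collapsed_dim c). collapsed_char_map c t \<in> k})"
      using K c by (intro openin_Union) (auto simp: collapsed_open_def)
    moreover have "(\<Union>k\<in>K. {t \<in> std_simplex (collapsed_dim c). collapsed_char_map c t \<in> k})
        = {t \<in> std_simplex (collapsed_dim c). collapsed_char_map c t \<in> \<Union>K}"
      by auto
    ultimately show "openin (simplex_top (collapsed_dim c))
        {t \<in> std_simplex (collapsed_dim c). collapsed_char_map c t \<in> \<Union>K}"
      by simp
  qed
qed

lemma openin_collapsed_top: "openin collapsed_top = collapsed_open"
  unfolding collapsed_top_def using istopology_collapsed_open by simp

lemma topspace_collapsed_top: "topspace collapsed_top = collapsed_carrier"
proof -
  have "collapsed_open collapsed_carrier" unfolding collapsed_open_def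
  proof (intro conjI ballI)
    fix c assume c: "c \<in> collapsed_cells"
    have "{t \<in> std_simplex (collapsed_dim c). collapsed_char_map c t \<in> collapsed_carrier}
        = topspace (simplex_top (collapsed_dim c))"
      using collapsed_char_map_in_carrier[OF c] by auto
    then show "openin (simplex_top (collapsed_dim c))
        {t \<in> std_simplex (collapsed_dim c). collapsed_char_map c t \<in> collapsed_carrier}"
      by (metis openin_topspace)
  qed simp
  then show ?thesis
    unfolding topspace_def openin_collapsed_top collapsed_open_def by blast
qed

lemma collapsed_ex1_open_cell:
  assumes y: "y \<in> collapsed_carrier"
  shows "\<exists>c\<in>collapsed_cells. y \<in> collapsed_char_map c ` open_simplex (collapsed_dim c) \<and>
    (\<forall>c'\<in>collapsed_cells. y \<in> collapsed_char_map c' ` open_simplex (collapsed_dim c') \<longrightarrow> c' = c)"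
proof -
  have on_open_cells: "collapsed_char_map c' t = (c', t)"
    if "c' \<in> collapsed_cells" "t \<in> open_simplex (collapsed_dim c')" "c' \<noteq> []" for c' t
    using that collapse_char_map_open_cell
    by (auto simp: collapsed_cells_def collapsed_dim_def collapsed_char_map_def)
  show ?thesis
  proof (cases "y = ([], simplex_vertex 0)")
    case True
    then have "y \<in> collapsed_char_map [] ` open_simplex (collapsed_dim [])"
      using open_simplex_0 std_simplex_0 by (simp add: collapsed_char_map_def collapsed_dim_def)
    moreover have "\<forall>c'\<in>collapsed_cells.
        y \<in> collapsed_char_map c' ` open_simplex (collapsed_dim c') \<longrightarrow> c' = []"
      using on_open_cells True by force
    ultimately show ?thesis by (auto simp: collapsed_cells_def)
  next
    case False
    then obtain x where x: "x \<in> topspace X" "y = collapse x"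
      using y by (auto simp: collapsed_carrier_def)
    then have nv: "0 < dm (cell_of x)" using False by (auto simp: collapse_def split: if_splits)
    then have y_eq: "y = ([cell_of x], coords_of x)" using x by (simp add: collapse_def)
    have "[cell_of x] \<in> collapsed_cells"
      using cell_of_in[OF x(1)] nv by (auto simp: collapsed_cells_def)
    moreover have "y \<in> collapsed_char_map [cell_of x] ` open_simplex (collapsed_dim [cell_of x])"
      using coords_of_in_open_simplex[OF x(1)] char_map_cell_of_coords_of[OF x(1)] x
      by (auto simp: collapsed_char_map_def collapsed_dim_def intro!: image_eqI[of _ _ "coords_of x"])
    moreover have "c' = [cell_of x]"
      if "c' \<in> collapsed_cells" "y \<in> collapsed_char_map c' ` open_simplex (collapsed_dim c')" for c'
      using that on_open_cells y_eq by (cases "c' = []") (auto simp: collapsed_char_map_def)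
    ultimately show ?thesis by blast
  qed
qed

lemma collapsed_char_map_face:
  assumes c: "c \<in> collapsed_cells" and "0 < collapsed_dim c" "i \<le> collapsed_dim c"
  shows "\<exists>c'\<in>collapsed_cells. collapsed_dim c' = collapsed_dim c - 1 \<and>
    (\<forall>t\<in>std_simplex (collapsed_dim c - 1). collapsed_char_map c (face_map i t) = collapsed_char_map c' t)"
proof -
  obtain c0 where c0: "c = [c0]" "c0 \<in> I" "0 < dm c0"
    using assms by (auto simp: collapsed_cells_def collapsed_dim_def)
  obtain c1 where c1: "c1 \<in> I" "dm c1 = dm c0 - 1"
      "\<forall>t\<in>std_simplex (dm c0 - 1). \<sigma> c0 (face_map i t) = \<sigma> c1 t"
    using char_map_face[OF c0(2,3), of i] assms c0 by (auto simp: collapsed_dim_def)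
  have face: "collapsed_char_map c (face_map i t) = collapse (\<sigma> c1 t)"
    if "t \<in> std_simplex (dm c0 - 1)" for t
    using c0(1) c1(3) that by (simp add: collapsed_char_map_def)
  show ?thesis
  proof (cases "dm c1 = 0")
    case True
    then have "\<forall>t\<in>std_simplex (collapsed_dim c - 1).
        collapsed_char_map c (face_map i t) = collapsed_char_map [] t"
      using face collapse_char_map_vertex[OF c1(1)] c0(1) c1(2)
      by (simp add: collapsed_char_map_def collapsed_dim_def)
    moreover have "collapsed_dim [] = collapsed_dim c - 1"
      using c0(1) c1(2) True by (simp add: collapsed_dim_def)
    ultimately show ?thesis by (auto simp: collapsed_cells_def)
  next
    case False
    then have "[c1] \<in> collapsed_cells" using c1(1) by (auto simp: collapsed_cells_def)
    moreover have "\<forall>t\<in>std_simplex (collapsed_dim c - 1).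
        collapsed_char_map c (face_map i t) = collapsed_char_map [c1] t"
      using face c0(1) by (simp add: collapsed_char_map_def collapsed_dim_def)
    moreover have "collapsed_dim [c1] = collapsed_dim c - 1"
      using c0(1) c1(2) by (simp add: collapsed_dim_def)
    ultimately show ?thesis by blast
  qed
qed

lemma delta_complex_collapsed: "delta_complex collapsed_top collapsed_cells collapsed_dim collapsed_char_map"
  unfolding delta_complex_def topspace_collapsed_top openin_collapsed_top
proof (intro conjI ballI allI impI)
  fix c assume c: "c \<in> collapsed_cells"
  show "continuous_map (simplex_top (collapsed_dim c)) collapsed_top (collapsed_char_map c)"
    unfolding continuous_map topspace_collapsed_top openin_collapsed_top
    using collapsed_char_map_in_carrier[OF c] c by (auto simp: collapsed_open_def)
  show "inj_on (collapsed_char_map c) (open_simplex (collapsed_dim c))"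
  proof (cases "c = []")
    case True
    then show ?thesis using open_simplex_0 std_simplex_0 by (simp add: collapsed_dim_def inj_on_def)
  next
    case False
    then obtain c0 where c0: "c = [c0]" "c0 \<in> I" "0 < dm c0"
      using c by (auto simp: collapsed_cells_def)
    show ?thesis
      unfolding inj_on_def c0(1) collapsed_char_map_def collapsed_dim_def
      using collapse_char_map_open_cell[OF c0(2) _ c0(3)] by simp
  qed
next
  fix y assume "y \<in> collapsed_carrier"
  then show "\<exists>c\<in>collapsed_cells. y \<in> collapsed_char_map c ` open_simplex (collapsed_dim c) \<and>
    (\<forall>c'\<in>collapsed_cells. y \<in> collapsed_char_map c' ` open_simplex (collapsed_dim c') \<longrightarrow> c' = c)"
    by (rule collapsed_ex1_open_cell)
next
  fix c i assume "c \<in> collapsed_cells" "0 < collapsed_dim c" "i \<le> collapsed_dim c"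
  then show "\<exists>c'\<in>collapsed_cells. collapsed_dim c' = collapsed_dim c - 1 \<and>
    (\<forall>t\<in>std_simplex (collapsed_dim c - 1). collapsed_char_map c (face_map i t) = collapsed_char_map c' t)"
    by (rule collapsed_char_map_face)
qed (simp add: collapsed_open_def)

lemma card_zero_cells_collapsed: "card (zero_cells collapsed_cells collapsed_dim) = 1"
proof -
  have "zero_cells collapsed_cells collapsed_dim = {[]}"
    by (auto simp: zero_cells_def collapsed_cells_def collapsed_dim_def)
  then show ?thesis by simp
qed

lemma continuous_map_collapse: "continuous_map X collapsed_top collapse"
  unfolding continuous_map topspace_collapsed_top openin_collapsed_top
proof (intro conjI allI impI)
  show "collapse ` topspace X \<subseteq> collapsed_carrier" by (auto simp: collapsed_carrier_def)
  fix U assume U: "collapsed_open U"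
  show "openin X {x \<in> topspace X. collapse x \<in> U}" unfolding openin_iff_char_map_preimages
  proof (intro conjI ballI)
    fix c assume c: "c \<in> I"
    show "openin (simplex_top (dm c)) {t \<in> std_simplex (dm c). \<sigma> c t \<in> {x \<in> topspace X. collapse x \<in> U}}"
    proof (cases "dm c = 0")
      case True
      show ?thesis unfolding True by (rule openin_simplex_top_0) auto
    next
      case False
      then have "[c] \<in> collapsed_cells" using c by (auto simp: collapsed_cells_def)
      then have "openin (simplex_top (collapsed_dim [c]))
          {t \<in> std_simplex (collapsed_dim [c]). collapsed_char_map [c] t \<in> U}"
        using U unfolding collapsed_open_def by blast
      then have "openin (simplex_top (dm c)) {t \<in> std_simplex (dm c). collapse (\<sigma> c t) \<in> U}"
        by (simp add: collapsed_dim_def collapsed_char_map_def)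
      moreover have "{t \<in> std_simplex (dm c). \<sigma> c t \<in> {x \<in> topspace X. collapse x \<in> U}}
          = {t \<in> std_simplex (dm c). collapse (\<sigma> c t) \<in> U}"
        using char_map_in_topspace[OF c] by auto
      ultimately show ?thesis by simp
    qed
  qed auto
qed

section \<open>The collapse is an immersion\<close>

lemma openin_collapse_image_saturated:
  assumes W: "openin X W"
    and saturated: "\<And>x w. x \<in> topspace X \<Longrightarrow> w \<in> W \<Longrightarrow> collapse x = collapse w \<Longrightarrow> x \<in> W"
  shows "openin collapsed_top (collapse ` W)"
  unfolding openin_collapsed_top collapsed_open_def
proof (intro conjI ballI)
  show "collapse ` W \<subseteq> collapsed_carrier"
    using openin_subset[OF W] by (auto simp: collapsed_carrier_def)
  fix c assume c: "c \<in> collapsed_cells"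
  show "openin (simplex_top (collapsed_dim c))
      {t \<in> std_simplex (collapsed_dim c). collapsed_char_map c t \<in> collapse ` W}"
  proof (cases "c = []")
    case True
    then show ?thesis by (simp add: collapsed_dim_def openin_simplex_top_0)
  next
    case False
    then obtain c0 where c0: "c = [c0]" "c0 \<in> I" using c by (auto simp: collapsed_cells_def)
    have "{t \<in> std_simplex (collapsed_dim c). collapsed_char_map c t \<in> collapse ` W}
        = {t \<in> std_simplex (dm c0). \<sigma> c0 t \<in> W}"
    proof (intro set_eqI iffI)
      fix t assume "t \<in> {t \<in> std_simplex (collapsed_dim c). collapsed_char_map c t \<in> collapse ` W}"
      then have t: "t \<in> std_simplex (dm c0)" "collapse (\<sigma> c0 t) \<in> collapse ` W"
        by (auto simp: c0 collapsed_dim_def collapsed_char_map_def)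
      then have "\<sigma> c0 t \<in> W" using saturated char_map_in_topspace[OF c0(2) t(1)] by blast
      then show "t \<in> {t \<in> std_simplex (dm c0). \<sigma> c0 t \<in> W}" using t by blast
    qed (auto simp: c0 collapsed_dim_def collapsed_char_map_def)
    then show ?thesis using W c0 openin_iff_char_map_preimages by (auto simp: collapsed_dim_def)
  qed
qed

text \<open>Only the vertices are identified, so open sets containing all or none of them have open
  images.\<close>

lemma openin_collapse_image:
  assumes "openin X W"
    and "(\<forall>y\<in>W. 0 < dm (cell_of y)) \<or> {y \<in> topspace X. dm (cell_of y) = 0} \<subseteq> W"
  shows "openin collapsed_top (collapse ` W)"
proof (rule openin_collapse_image_saturated[OF assms(1)])
  fix x w assume xw: "x \<in> topspace X" "w \<in> W" "collapse x = collapse w"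
  have w: "w \<in> topspace X" using openin_subset[OF assms(1)] xw(2) by blast
  show "x \<in> W"
  proof (cases "0 < dm (cell_of x)")
    case True
    then show ?thesis using collapse_eq_non_vertex[OF xw(1) w xw(3)] xw(2) by simp
  next
    case False
    then have "dm (cell_of w) = 0"
      using collapse_eq_non_vertex[OF w xw(1) xw(3)[symmetric]] by auto
    then show ?thesis using assms(2) xw(1,2) False by auto
  qed
qed

lemma inj_on_collapse:
  assumes "U \<subseteq> topspace X"
    and "\<And>y z. y \<in> U \<Longrightarrow> z \<in> U \<Longrightarrow> dm (cell_of y) = 0 \<Longrightarrow> dm (cell_of z) = 0 \<Longrightarrow> y = z"
  shows "inj_on collapse U"
proof (rule inj_onI)
  fix y z assume yz: "y \<in> U" "z \<in> U" "collapse y = collapse z"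
  consider "0 < dm (cell_of y)" | "0 < dm (cell_of z)" | "dm (cell_of y) = 0" "dm (cell_of z) = 0"
    by linarith
  then show "y = z"
    by cases (use assms yz collapse_eq_non_vertex in \<open>blast, metis subsetD, blast\<close>)
qed

lemma homeomorphic_map_collapse:
  assumes U: "openin X U" and inj: "inj_on collapse U"
    and open_image: "\<And>W. openin X W \<Longrightarrow> W \<subseteq> U \<Longrightarrow>
      \<exists>T. openin collapsed_top T \<and> collapse ` W = T \<inter> collapse ` U"
  shows "homeomorphic_map (subtopology X U) (subtopology collapsed_top (collapse ` U)) collapse"
proof (rule bijective_open_imp_homeomorphic_map)
  have U_sub: "U \<subseteq> topspace X" using openin_subset[OF U] .
  show "continuous_map (subtopology X U) (subtopology collapsed_top (collapse ` U)) collapse"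
    using continuous_map_collapse U_sub
    by (auto simp: continuous_map_in_subtopology intro: continuous_map_from_subtopology)
  show "open_map (subtopology X U) (subtopology collapsed_top (collapse ` U)) collapse"
    unfolding open_map_def
  proof (intro allI impI)
    fix W assume "openin (subtopology X U) W"
    then have "openin X W" "W \<subseteq> U" using openin_open_subtopology[OF U] by auto
    then obtain T where "openin collapsed_top T" "collapse ` W = T \<inter> collapse ` U"
      using open_image by blast
    then show "openin (subtopology collapsed_top (collapse ` U)) (collapse ` W)"
      unfolding openin_subtopology by blast
  qed
  have "collapse ` U \<subseteq> topspace collapsed_top"
    using U_sub by (auto simp: topspace_collapsed_top collapsed_carrier_def)
  then show "collapse ` topspace (subtopology X U) = topspace (subtopology collapsed_top (collapse ` U))"
    using U_sub by auto
  show "inj_on collapse (topspace (subtopology X U))" using inj by (simp add: inj_on_subset)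
qed

definition vertex_star :: "'x \<Rightarrow> 'x set" where
  "vertex_star x = {y \<in> topspace X. 1/2 < vertex_mass (\<lambda>z. z = x) y}"

lemma openin_vertex_star: "openin X (vertex_star x)"
  unfolding vertex_star_def by (rule openin_vertex_mass_gt)

lemma vertex_in_vertex_star: "x \<in> topspace X \<Longrightarrow> dm (cell_of x) = 0 \<Longrightarrow> x \<in> vertex_star x"
  by (simp add: vertex_star_def vertex_mass_vertex)

lemma vertex_star_vertex: "y \<in> vertex_star x \<Longrightarrow> dm (cell_of y) = 0 \<Longrightarrow> y = x"
  by (auto simp: vertex_star_def vertex_mass_vertex split: if_splits)

text \<open>Open sets inside the star of \<open>x\<close> that contain \<open>x\<close> are completed to saturated open sets
  by the points putting mass more than \<open>1/2\<close> on the other vertices.\<close>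

lemma collapse_open_image_in_vertex_star:
  assumes x: "x \<in> topspace X" "dm (cell_of x) = 0"
    and W: "openin X W" "W \<subseteq> vertex_star x"
  shows "\<exists>T. openin collapsed_top T \<and> collapse ` W = T \<inter> collapse ` vertex_star x"
proof (cases "x \<in> W")
  case True
  define N where "N = {y \<in> topspace X. 1/2 < vertex_mass (\<lambda>z. z \<noteq> x) y}"
  have N: "openin X N" unfolding N_def by (rule openin_vertex_mass_gt)
  have disjoint: "N \<inter> vertex_star x = {}"
    using vertex_mass_add_complement[of _ "\<lambda>z. z = x"] by (fastforce simp: N_def vertex_star_def)
  have "{y \<in> topspace X. dm (cell_of y) = 0} \<subseteq> W \<union> N"
    using True by (auto simp: N_def vertex_mass_vertex)
  then have "openin collapsed_top (collapse ` (W \<union> N))"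
    using W(1) N by (intro openin_collapse_image openin_Un) auto
  moreover have "collapse ` W = collapse ` (W \<union> N) \<inter> collapse ` vertex_star x"
  proof (intro equalityI subsetI)
    fix z assume "z \<in> collapse ` (W \<union> N) \<inter> collapse ` vertex_star x"
    then obtain v u where vu: "v \<in> W \<union> N" "u \<in> vertex_star x" "z = collapse v" "z = collapse u"
      by blast
    have u: "u \<in> topspace X" using vu(2) by (simp add: vertex_star_def)
    show "z \<in> collapse ` W"
    proof (cases "v \<in> W")
      case False
      then have "v \<in> N" "v \<in> topspace X" using vu(1) by (auto simp: N_def)
      then have "\<not> 0 < dm (cell_of u)"
        using collapse_eq_non_vertex[OF u _ vu(4)[symmetric, unfolded vu(3)]] vu(2) disjoint by auto
      then have "u = x" using vertex_star_vertex vu(2) by blast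
      then show ?thesis using vu(4) True by blast
    qed (use vu in blast)
  qed (use W(2) in auto)
  ultimately show ?thesis by blast
next
  case False
  then have "\<forall>y\<in>W. 0 < dm (cell_of y)" using W(2) vertex_star_vertex by blast
  then have "openin collapsed_top (collapse ` W)" using openin_collapse_image W(1) by blast
  moreover have "collapse ` W = collapse ` W \<inter> collapse ` vertex_star x" using W(2) by auto
  ultimately show ?thesis by blast
qed

lemma collapse_locally_homeomorphic:
  assumes x: "x \<in> topspace X"
  shows "\<exists>U. openin X U \<and> x \<in> U \<and>
    homeomorphic_map (subtopology X U) (subtopology collapsed_top (collapse ` U)) collapse"
proof (cases "0 < dm (cell_of x)")
  case True
  define U where "U = {y \<in> topspace X. 0 < dm (cell_of y)}"
  have U: "openin X U" using openin_non_vertices by (simp add: U_def)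
  have "homeomorphic_map (subtopology X U) (subtopology collapsed_top (collapse ` U)) collapse"
  proof (rule homeomorphic_map_collapse[OF U])
    show "inj_on collapse U" by (rule inj_on_collapse) (auto simp: U_def)
    fix W assume W: "openin X W" "W \<subseteq> U"
    then have "openin collapsed_top (collapse ` W)"
      by (intro openin_collapse_image) (auto simp: U_def)
    moreover have "collapse ` W = collapse ` W \<inter> collapse ` U" using W(2) by auto
    ultimately show "\<exists>T. openin collapsed_top T \<and> collapse ` W = T \<inter> collapse ` U" by blast
  qed
  then show ?thesis using U x True by (auto simp: U_def)
next
  case False
  then have "homeomorphic_map (subtopology X (vertex_star x))
      (subtopology collapsed_top (collapse ` vertex_star x)) collapse"
    using openin_subset[OF openin_vertex_star] vertex_star_vertex
    by (intro homeomorphic_map_collapse openin_vertex_star inj_on_collapse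
        collapse_open_image_in_vertex_star[OF x]) blast+
  then show ?thesis using openin_vertex_star vertex_in_vertex_star[OF x] False by blast
qed

lemma delta_immersion_collapse:
  "delta_immersion X I dm \<sigma> collapsed_top collapsed_cells collapsed_dim collapsed_char_map collapse"
  unfolding delta_immersion_def
proof (intro conjI)
  let ?\<phi> = "\<lambda>c. if dm c = 0 then [] else [c]"
  show "\<exists>\<phi>. \<forall>c\<in>I. \<phi> c \<in> collapsed_cells \<and> collapsed_dim (\<phi> c) = dm c \<and>
      (\<forall>t\<in>std_simplex (dm c). collapse (\<sigma> c t) = collapsed_char_map (\<phi> c) t)"
    using collapse_char_map_vertex
    by (intro exI[of _ ?\<phi>])
      (auto simp: collapsed_cells_def collapsed_dim_def collapsed_char_map_def)
qed (use continuous_map_collapse collapse_locally_homeomorphic in blast)+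

end

theorem mainTheorem3:
  fixes X :: "'x topology" and I :: "'c set" and dm :: "'c \<Rightarrow> nat"
    and \<sigma> :: "'c \<Rightarrow> (nat \<Rightarrow> real) \<Rightarrow> 'x"
  assumes "delta_complex X I dm \<sigma>"
    and "connected_space X"
    and "finite_dimensional I dm"
  shows "\<exists>(Y :: ('c list \<times> (nat \<Rightarrow> real)) topology) (J :: 'c list set) dimY \<sigma>Y f.
           delta_complex Y J dimY \<sigma>Y \<and> card (zero_cells J dimY) = 1 \<and>
           delta_immersion X I dm \<sigma> Y J dimY \<sigma>Y f"
proof -
  interpret delta_complex_space X I dm \<sigma> by (rule delta_complex_space.intro) fact
  show ?thesis
    using delta_complex_collapsed card_zero_cells_collapsed delta_immersion_collapse by blast
qed

end
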